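(* Consider problem (VP) under the standing assumptions at $\bar x\in Q_0$. Let $\bar x$ be a local Geoffrion properly efficient solution of (VP), and suppose $L^2(Q;\bar x,u)\subset T^2(Q_0;\bar x,u)$ for every critical direction $u\in\mathcal{C}(\bar x)$. Then there is no pair $(u,v)\in X\times X$ such that $F_i^2(\bar x;u,v)\leqq_{\rm lex}(0,0)$ for all $i\in I$, $F_i^2(\bar x;u,v)<_{\rm lex}(0,0)$ for at least one $i\in I(\bar x;u)$, and $G_j^2(\bar x;u,v)\leqq_{\rm lex}(0,0)$ for all $j\in J(\bar x)$.
   Context: Standing setting: $X$ is a Banach space; $I=\{1,\dots,p\}$, $J=\{1,\dots,m\}$; $f_i,g_j\colon X\to\mathbb{R}$; (VP) minimizes $f=(f_1,\dots,f_p)$ over $Q_0:=\{x\in X: g_j(x)\leqq 0,\ j\in J\}$. $J(\bar x):=\{j\in J: g_j(\bar x)=0\}$. Standing assumptions: $f_i$ ($i\in I$), $g_j$ ($j\in J(\bar x)$) locally Lipschitz at $\bar x$; $g_j$ ($j\notin J(\bar x)$) continuous at $\bar x$. $F^{\circ}(\bar x,u):=\limsup_{x\to\bar x,\,t\downarrow0}\frac{F(x+tu)-F(x)}{t}$; $F^{\circ\circ}(\bar x,u):=\limsup_{t\downarrow0}\frac{F(\bar x+tu)-F(\bar x)-tF^{\circ}(\bar x,u)}{\frac12t^2}$. Lexicographic order on $\mathbb{R}^2$: $a\leqq_{\rm lex}b$ iff $a_1<b_1$ or ($a_1=b_1$, $a_2\leqq b_2$); $a<_{\rm lex}b$ iff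 $a_1<b_1$ or ($a_1=b_1$, $a_2<b_2$). $F_i^2(\bar x;u,v):=(f_i^{\circ}(\bar x,u),\, f_i^{\circ}(\bar x,v)+f_i^{\circ\circ}(\bar x,u))$, $G_j^2(\bar x;u,v):=(g_j^{\circ}(\bar x,u),\, g_j^{\circ}(\bar x,v)+g_j^{\circ\circ}(\bar x,u))$; $I(\bar x;u):=\{i\in I: f_i^{\circ}(\bar x,u)=0\}$. $Q:=Q_0\cap\{x: f_i(x)\leqq f_i(\bar x),\ i\in I\}$; $L^2(Q;\bar x,u):=\{v: F_i^2(\bar x;u,v)\leqq_{\rm lex}(0,0)\ \forall i\in I,\ G_j^2(\bar x;u,v)\leqq_{\rm lex}(0,0)\ \forall j\in J(\bar x)\}$. $T^2(\Omega;\bar x,u):=\{v: \exists t_k\downarrow0,\ \exists v^k\to v,\ \bar x+t_ku+\frac12t_k^2v^k\in\Omega\ \forall k\}$. Critical direction: $u$ with $f_i^{\circ}(\bar x,u)\leqq0$ for all $i$, $=0$ for some $i$, and $g_j^{\circ}(\bar x,u)\leqq0$ for all $j\in J(\bar x)$; $\mathcal{C}(\bar x)$ is the set of these. Local Geoffrion properly efficient solution: there is a neighborhood $U$ of $\bar x$ such that (a) no $x\in U\cap Q_0$ has $f(x)\leqq f(\bar x)$ componentwise with $f(x)\ne f(\bar x)$, and (b) there is $M>0$ such that for every $i\in I$ and every $x\in U\cap Q_0$ with $f_i(x)<f_i(\bar x)$ there exists $j\in I$ with $f_j(x)>f_j(\bar x)$ and $\frac{f_i(\bar x)-f_i(x)}{f_j(x)-f_j(\bar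 x)}\leqq M$. *)

theory Defs
  imports "HOL-Analysis.Analysis" "HOL-Library.Extended_Real"
begin

definition loc_lipschitz_at :: "('a::metric_space \<Rightarrow> real) \<Rightarrow> 'a \<Rightarrow> bool" where
  "loc_lipschitz_at F x \<longleftrightarrow> (\<exists>U L. open U \<and> x \<in> U \<and> L-lipschitz_on U F)"

definition clarke_dd :: "('a::real_normed_vector \<Rightarrow> real) \<Rightarrow> 'a \<Rightarrow> 'a \<Rightarrow> ereal" where
  "clarke_dd F x u = Limsup (nhds x \<times>\<^sub>F at_right 0)
      (\<lambda>(y, t). ereal ((F (y + t *\<^sub>R u) - F y) / t))"

text \<open>Second-order upper derivative; uses the (finite, under local Lipschitz) value of clarke_dd.\<close>
definition clarke_dd2 :: "('a::real_normed_vector \<Rightarrow> real) \<Rightarrow> 'a \<Rightarrow> 'a \<Rightarrow> ereal" where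
  "clarke_dd2 F x u = Limsup (at_right 0)
      (\<lambda>t. ereal ((F (x + t *\<^sub>R u) - F x - t * real_of_ereal (clarke_dd F x u)) / ((1/2) * t^2)))"

definition lex_le :: "ereal \<times> ereal \<Rightarrow> ereal \<times> ereal \<Rightarrow> bool" where
  "lex_le a b \<longleftrightarrow> fst a < fst b \<or> (fst a = fst b \<and> snd a \<le> snd b)"

definition lex_lt :: "ereal \<times> ereal \<Rightarrow> ereal \<times> ereal \<Rightarrow> bool" where
  "lex_lt a b \<longleftrightarrow> fst a < fst b \<or> (fst a = fst b \<and> snd a < snd b)"

definition second_pair :: "('a::real_normed_vector \<Rightarrow> real) \<Rightarrow> 'a \<Rightarrow> 'a \<Rightarrow> 'a \<Rightarrow> ereal \<times> ereal" where
  "second_pair F x u v = (clarke_dd F x u, clarke_dd F x v + clarke_dd2 F x u)"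

definition feasible_set :: "nat \<Rightarrow> (nat \<Rightarrow> 'a \<Rightarrow> real) \<Rightarrow> 'a set" where
  "feasible_set m g = {x. \<forall>j\<in>{1..m}. g j x \<le> 0}"

definition active_set :: "nat \<Rightarrow> (nat \<Rightarrow> 'a \<Rightarrow> real) \<Rightarrow> 'a \<Rightarrow> nat set" where
  "active_set m g xb = {j\<in>{1..m}. g j xb = 0}"

definition level_set :: "nat \<Rightarrow> (nat \<Rightarrow> 'a \<Rightarrow> real) \<Rightarrow> nat \<Rightarrow> (nat \<Rightarrow> 'a \<Rightarrow> real) \<Rightarrow> 'a \<Rightarrow> 'a set" where
  "level_set p f m g xb = feasible_set m g \<inter> {x. \<forall>i\<in>{1..p}. f i x \<le> f i xb}"

definition L2_set :: "nat \<Rightarrow> (nat \<Rightarrow> 'a::real_normed_vector \<Rightarrow> real) \<Rightarrow> nat \<Rightarrow> (nat \<Rightarrow> 'a \<Rightarrow> real) \<Rightarrow> 'a \<Rightarrow> 'a \<Rightarrow> 'a set" where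
  "L2_set p f m g xb u = {v. (\<forall>i\<in>{1..p}. lex_le (second_pair (f i) xb u v) (0, 0)) \<and>
      (\<forall>j\<in>active_set m g xb. lex_le (second_pair (g j) xb u v) (0, 0))}"

definition T2_set :: "'a::real_normed_vector set \<Rightarrow> 'a \<Rightarrow> 'a \<Rightarrow> 'a set" where
  "T2_set \<Omega> xb u = {v. \<exists>t w. (\<forall>k. t k > 0) \<and> t \<longlonglongrightarrow> 0 \<and> w \<longlonglongrightarrow> v \<and>
      (\<forall>k. xb + t k *\<^sub>R u + ((1/2) * (t k)^2) *\<^sub>R w k \<in> \<Omega>)}"

definition active_obj :: "nat \<Rightarrow> (nat \<Rightarrow> 'a::real_normed_vector \<Rightarrow> real) \<Rightarrow> 'a \<Rightarrow> 'a \<Rightarrow> nat set" where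
  "active_obj p f xb u = {i\<in>{1..p}. clarke_dd (f i) xb u = 0}"

definition critical_dirs :: "nat \<Rightarrow> (nat \<Rightarrow> 'a::real_normed_vector \<Rightarrow> real) \<Rightarrow> nat \<Rightarrow> (nat \<Rightarrow> 'a \<Rightarrow> real) \<Rightarrow> 'a \<Rightarrow> 'a set" where
  "critical_dirs p f m g xb = {u. (\<forall>i\<in>{1..p}. clarke_dd (f i) xb u \<le> 0) \<and>
      (\<exists>i\<in>{1..p}. clarke_dd (f i) xb u = 0) \<and>
      (\<forall>j\<in>active_set m g xb. clarke_dd (g j) xb u \<le> 0)}"

definition local_geoffrion :: "nat \<Rightarrow> (nat \<Rightarrow> 'a::topological_space \<Rightarrow> real) \<Rightarrow> nat \<Rightarrow> (nat \<Rightarrow> 'a \<Rightarrow> real) \<Rightarrow> 'a \<Rightarrow> bool" where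
  "local_geoffrion p f m g xb \<longleftrightarrow> (\<exists>U. open U \<and> xb \<in> U \<and>
     (\<not> (\<exists>x\<in>U \<inter> feasible_set m g. (\<forall>i\<in>{1..p}. f i x \<le> f i xb) \<and> (\<exists>i\<in>{1..p}. f i x \<noteq> f i xb))) \<and>
     (\<exists>M>0. \<forall>i\<in>{1..p}. \<forall>x\<in>U \<inter> feasible_set m g. f i x < f i xb \<longrightarrow>
        (\<exists>j\<in>{1..p}. f j x > f j xb \<and> (f i xb - f i x) / (f j x - f j xb) \<le> M)))"

end

theory Submission
  imports Defs
begin

text \<open>If such a pair (u, v) existed, u would be a critical direction and v would lie in
  L2(Q; x, u), so the constraint qualification yields feasible points x + t u + (t^2/2) w with
  t \<down> 0 and w \<rightarrow> v. Along them the Clarke derivatives give second-order upper estimates: the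
  objective with the strict lexicographic inequality drops by at least c t^2, while every
  objective rises by at most o(t^2). The trade-off ratio in Geoffrion's definition is therefore
  unbounded, contradicting proper efficiency.\<close>

lemma ereal_add_less_split:
  assumes "A + B < ereal c"
  obtains a b where "A < ereal a" "B < ereal b" "a + b < c"
proof -
  have "A < ereal c - B" using assms by (cases A; cases B) auto
  then obtain a where a: "A < ereal a" "ereal a < ereal c - B" using ereal_dense2 by blast
  then have "B < ereal (c - a)" by (cases B) auto
  then obtain b where "B < ereal b" "ereal b < ereal (c - a)" using ereal_dense2 by blast
  with a that show ?thesis by auto
qed

lemma loc_lipschitz_at_eventually:
  assumes "loc_lipschitz_at F x" "(y \<longlongrightarrow> x) G" "(z \<longlongrightarrow> x) G"
  obtains L where "eventually (\<lambda>k. dist (F (y k)) (F (z k)) \<le> L * dist (y k) (z k)) G"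
proof -
  obtain U L where U: "open U" "x \<in> U" and L: "L-lipschitz_on U F"
    using assms(1) unfolding loc_lipschitz_at_def by blast
  have "eventually (\<lambda>k. y k \<in> U \<and> z k \<in> U) G"
    using U assms(2,3) by (intro eventually_conj topological_tendstoD)
  then have "eventually (\<lambda>k. dist (F (y k)) (F (z k)) \<le> L * dist (y k) (z k)) G"
    by eventually_elim (auto intro: lipschitz_onD[OF L])
  with that show ?thesis .
qed

lemma clarke_dd_less_eventually:
  fixes F :: "'a::real_normed_vector \<Rightarrow> real"
  assumes "clarke_dd F x v < ereal a" "(y \<longlongrightarrow> x) G" "filterlim s (at_right 0) G"
  shows "eventually (\<lambda>k. F (y k + s k *\<^sub>R v) - F (y k) < a * s k) G"
proof -
  have "eventually (\<lambda>p. (F (fst p + snd p *\<^sub>R v) - F (fst p)) / snd p < a)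
      (nhds x \<times>\<^sub>F at_right 0)"
    using Limsup_lessD[OF assms(1)[unfolded clarke_dd_def]] by (simp add: case_prod_beta)
  then have "eventually (\<lambda>k. (F (y k + s k *\<^sub>R v) - F (y k)) / s k < a) G"
    using filterlim_Pair[OF assms(2,3)] unfolding filterlim_iff by fastforce
  moreover have "eventually (\<lambda>k. s k > 0) G"
    using assms(3) unfolding filterlim_at by (auto elim: eventually_mono)
  ultimately show ?thesis
    by eventually_elim (simp add: pos_divide_less_eq)
qed

lemma clarke_dd2_less_eventually:
  fixes F :: "'a::real_normed_vector \<Rightarrow> real"
  assumes "clarke_dd2 F x u < ereal b" "filterlim t (at_right 0) G"
  shows "eventually (\<lambda>k. F (x + t k *\<^sub>R u) - F x - t k * real_of_ereal (clarke_dd F x u)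
    < b * ((1/2) * (t k)\<^sup>2)) G"
proof -
  have "eventually (\<lambda>t. (F (x + t *\<^sub>R u) - F x - t * real_of_ereal (clarke_dd F x u))
      / ((1/2) * t\<^sup>2) < b) (at_right 0)"
    using Limsup_lessD[OF assms(1)[unfolded clarke_dd2_def]] by simp
  then have "eventually (\<lambda>k. (F (x + t k *\<^sub>R u) - F x - t k * real_of_ereal (clarke_dd F x u))
      / ((1/2) * (t k)\<^sup>2) < b) G"
    using assms(2) unfolding filterlim_iff by fastforce
  moreover have "eventually (\<lambda>k. t k > 0) G"
    using assms(2) unfolding filterlim_at by (auto elim: eventually_mono)
  ultimately show ?thesis
    by eventually_elim (simp add: pos_divide_less_eq)
qed

lemma tendsto_second_order_curve:
  fixes t :: "'b \<Rightarrow> real" and w :: "'b \<Rightarrow> 'a::real_normed_vector"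
  assumes "(t \<longlongrightarrow> 0) G" "(w \<longlongrightarrow> v) G"
  shows "((\<lambda>k. x + t k *\<^sub>R u + ((1/2) * (t k)\<^sup>2) *\<^sub>R w k) \<longlongrightarrow> x) G"
proof -
  have "((\<lambda>k. x + t k *\<^sub>R u + ((1/2) * (t k)\<^sup>2) *\<^sub>R w k)
      \<longlongrightarrow> x + 0 *\<^sub>R u + ((1/2) * 0\<^sup>2) *\<^sub>R v) G"
    by (intro tendsto_intros assms)
  then show ?thesis by simp
qed

lemma filterlim_half_square_at_right:
  fixes t :: "'b \<Rightarrow> real"
  assumes "filterlim t (at_right 0) G"
  shows "filterlim (\<lambda>k. (1/2) * (t k)\<^sup>2) (at_right 0) G"
proof -
  have "(t \<longlongrightarrow> 0) G" "eventually (\<lambda>k. t k > 0) G"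
    using assms unfolding filterlim_at by (auto elim: eventually_mono)
  then show ?thesis
    unfolding filterlim_at
    by (auto intro: tendsto_eq_intros elim: eventually_mono)
qed

lemma second_order_upper_estimate:
  fixes F :: "'a::real_normed_vector \<Rightarrow> real" and t :: "'b \<Rightarrow> real"
  assumes lip: "loc_lipschitz_at F x" and t: "filterlim t (at_right 0) G" and w: "(w \<longlongrightarrow> v) G"
    and u0: "clarke_dd F x u = 0" and less: "clarke_dd F x v + clarke_dd2 F x u < ereal c"
  shows "eventually (\<lambda>k. F (x + t k *\<^sub>R u + ((1/2) * (t k)\<^sup>2) *\<^sub>R w k) - F x
    \<le> c * ((1/2) * (t k)\<^sup>2)) G"
proof -
  obtain a b where a: "clarke_dd F x v < ereal a" and b: "clarke_dd2 F x u < ereal b"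
    and ab: "a + b < c" using ereal_add_less_split[OF less] .
  \<comment> \<open>The increment from x to x + t u + s w is split at y = x + t u and at y + s v; the three
    pieces are controlled by the second-order derivative at u, the Clarke derivative at v, and
    the Lipschitz constant, respectively.\<close>
  define s where "s k = (1/2) * (t k)\<^sup>2" for k
  define y where "y k = x + t k *\<^sub>R u" for k
  have s: "filterlim s (at_right 0) G"
    unfolding s_def by (rule filterlim_half_square_at_right[OF t])
  have t0: "(t \<longlongrightarrow> 0) G" using t by (simp add: filterlim_at)
  have y: "(y \<longlongrightarrow> x) G"
    unfolding y_def using tendsto_second_order_curve[OF t0 tendsto_const, of x u 0] by simp
  have "((\<lambda>k. y k + s k *\<^sub>R w k) \<longlongrightarrow> x) G" "((\<lambda>k. y k + s k *\<^sub>R v) \<longlongrightarrow> x) G"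
    using tendsto_second_order_curve[OF t0 w] tendsto_second_order_curve[OF t0 tendsto_const]
    by (simp_all add: y_def s_def)
  then obtain L where "eventually (\<lambda>k. dist (F (y k + s k *\<^sub>R w k)) (F (y k + s k *\<^sub>R v))
      \<le> L * dist (y k + s k *\<^sub>R w k) (y k + s k *\<^sub>R v)) G"
    by (rule loc_lipschitz_at_eventually[OF lip])
  moreover have "eventually (\<lambda>k. F (y k + s k *\<^sub>R v) - F (y k) < a * s k) G"
    by (rule clarke_dd_less_eventually[OF a y s])
  moreover have "eventually (\<lambda>k. F (y k) - F x < b * s k) G"
    using clarke_dd2_less_eventually[OF b t] by (simp add: u0 y_def s_def)
  moreover have "eventually (\<lambda>k. L * norm (w k - v) < c - a - b) G"
  proof -
    have "((\<lambda>k. L * norm (w k - v)) \<longlongrightarrow> L * norm (v - v)) G"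
      by (intro tendsto_intros w)
    from order_tendstoD(2)[OF this, of "c - a - b"] ab show ?thesis by simp
  qed
  moreover have "eventually (\<lambda>k. s k > 0) G"
    using s unfolding filterlim_at by (auto elim: eventually_mono)
  ultimately show ?thesis
  proof eventually_elim
    case (elim k)
    have "dist (y k + s k *\<^sub>R w k) (y k + s k *\<^sub>R v) = s k * norm (w k - v)"
      using elim(5) by (simp add: dist_norm scaleR_diff_right[symmetric])
    with elim(1) have "F (y k + s k *\<^sub>R w k) - F (y k + s k *\<^sub>R v) \<le> s k * (L * norm (w k - v))"
      by (simp add: dist_real_def abs_le_iff algebra_simps)
    also have "\<dots> \<le> s k * (c - a - b)"
      using elim(4,5) by (intro mult_left_mono) auto
    finally show ?case
      using elim(2,3) by (simp add: y_def s_def algebra_simps)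
  qed
qed

lemma first_order_descent_estimate:
  fixes F :: "'a::real_normed_vector \<Rightarrow> real" and t :: "'b \<Rightarrow> real"
  assumes lip: "loc_lipschitz_at F x" and t: "filterlim t (at_right 0) G" and w: "(w \<longlongrightarrow> v) G"
    and neg: "clarke_dd F x u < 0"
  shows "eventually (\<lambda>k. F (x + t k *\<^sub>R u + ((1/2) * (t k)\<^sup>2) *\<^sub>R w k) - F x \<le> 0) G"
proof -
  obtain a where a: "clarke_dd F x u < ereal a" and a0: "a < 0"
    using ereal_dense2[OF neg] by auto
  define y where "y k = x + t k *\<^sub>R u" for k
  have t0: "(t \<longlongrightarrow> 0) G" using t by (simp add: filterlim_at)
  have y: "(y \<longlongrightarrow> x) G"
    unfolding y_def using tendsto_second_order_curve[OF t0 tendsto_const, of x u 0] by simp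
  have "((\<lambda>k. y k + ((1/2) * (t k)\<^sup>2) *\<^sub>R w k) \<longlongrightarrow> x) G"
    using tendsto_second_order_curve[OF t0 w] by (simp add: y_def)
  from this y obtain L where "eventually (\<lambda>k. dist (F (y k + ((1/2) * (t k)\<^sup>2) *\<^sub>R w k)) (F (y k))
      \<le> L * dist (y k + ((1/2) * (t k)\<^sup>2) *\<^sub>R w k) (y k)) G"
    by (rule loc_lipschitz_at_eventually[OF lip])
  moreover have "eventually (\<lambda>k. F (y k) - F x < a * t k) G"
    using clarke_dd_less_eventually[OF a tendsto_const t] by (simp add: y_def)
  moreover have "eventually (\<lambda>k. L / 2 * norm (w k) * t k < - a) G"
  proof -
    have "((\<lambda>k. L / 2 * norm (w k) * t k) \<longlongrightarrow> L / 2 * norm v * 0) G"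
      by (intro tendsto_intros w t0)
    from order_tendstoD(2)[OF this, of "- a"] a0 show ?thesis by simp
  qed
  moreover have "eventually (\<lambda>k. t k > 0) G"
    using t unfolding filterlim_at by (auto elim: eventually_mono)
  ultimately show ?thesis
  proof eventually_elim
    case (elim k)
    have "F (y k + ((1/2) * (t k)\<^sup>2) *\<^sub>R w k) - F (y k)
        \<le> dist (F (y k + ((1/2) * (t k)\<^sup>2) *\<^sub>R w k)) (F (y k))"
      by (simp add: dist_real_def)
    also have "\<dots> \<le> L * dist (y k + ((1/2) * (t k)\<^sup>2) *\<^sub>R w k) (y k)"
      by (rule elim(1))
    also have "\<dots> = t k * (L / 2 * norm (w k) * t k)"
      by (simp add: dist_norm power2_eq_square)
    also have "\<dots> \<le> t k * (- a)"
      using elim(3,4) by (intro mult_left_mono) auto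
    finally show ?case
      using elim(2) by (simp add: y_def algebra_simps)
  qed
qed

lemma lex_le_second_pair_zero_iff:
  "lex_le (second_pair F x u v) (0, 0) \<longleftrightarrow>
    clarke_dd F x u < 0 \<or> clarke_dd F x u = 0 \<and> clarke_dd F x v + clarke_dd2 F x u \<le> 0"
  by (simp add: lex_le_def second_pair_def)

lemma lex_lt_second_pair_zero_iff:
  "lex_lt (second_pair F x u v) (0, 0) \<longleftrightarrow>
    clarke_dd F x u < 0 \<or> clarke_dd F x u = 0 \<and> clarke_dd F x v + clarke_dd2 F x u < 0"
  by (simp add: lex_lt_def second_pair_def)

lemma lex_le_second_pair_imp_eventually_le:
  fixes F :: "'a::real_normed_vector \<Rightarrow> real" and t :: "'b \<Rightarrow> real"
  assumes lip: "loc_lipschitz_at F x" and t: "filterlim t (at_right 0) G" and w: "(w \<longlongrightarrow> v) G"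
    and lex: "lex_le (second_pair F x u v) (0, 0)" and e: "e > 0"
  shows "eventually (\<lambda>k. F (x + t k *\<^sub>R u + ((1/2) * (t k)\<^sup>2) *\<^sub>R w k) - F x \<le> e * (t k)\<^sup>2) G"
  using lex unfolding lex_le_second_pair_zero_iff
proof (elim disjE conjE)
  assume "clarke_dd F x u < 0"
  from first_order_descent_estimate[OF lip t w this] show ?thesis
    by (rule eventually_mono) (use e in \<open>simp add: order_trans[OF _ mult_nonneg_nonneg]\<close>)
next
  assume u0: "clarke_dd F x u = 0" and "clarke_dd F x v + clarke_dd2 F x u \<le> 0"
  then have "clarke_dd F x v + clarke_dd2 F x u < ereal (2 * e)"
    using e by (simp add: le_less_trans)
  from second_order_upper_estimate[OF lip t w u0 this] show ?thesis by simp
qed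

lemma lex_lt_second_pair_imp_eventually_le:
  fixes F :: "'a::real_normed_vector \<Rightarrow> real" and t :: "'b \<Rightarrow> real"
  assumes lip: "loc_lipschitz_at F x" and t: "filterlim t (at_right 0) G" and w: "(w \<longlongrightarrow> v) G"
    and u0: "clarke_dd F x u = 0" and lex: "lex_lt (second_pair F x u v) (0, 0)"
  obtains c where "c > 0"
    "eventually (\<lambda>k. F (x + t k *\<^sub>R u + ((1/2) * (t k)\<^sup>2) *\<^sub>R w k) - F x \<le> - c * (t k)\<^sup>2) G"
proof -
  have "clarke_dd F x v + clarke_dd2 F x u < 0"
    using lex u0 unfolding lex_lt_second_pair_zero_iff by simp
  then obtain c where c: "clarke_dd F x v + clarke_dd2 F x u < ereal c" "c < 0"
    using ereal_dense2 by fastforce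
  from second_order_upper_estimate[OF lip t w u0 c(1)] c(2) show ?thesis
    by (intro that[of "- c / 2"]) auto
qed

lemma not_local_geoffrion_if_unbounded_tradeoff:
  fixes f g :: "nat \<Rightarrow> 'a::topological_space \<Rightarrow> real" and x :: "nat \<Rightarrow> 'a"
  assumes x: "x \<longlonglongrightarrow> xb" and feas: "\<forall>k. x k \<in> feasible_set m g" and \<tau>: "\<forall>k. \<tau> k > 0"
    and i0: "i0 \<in> {1..p}" and c: "c > 0"
    and descent: "eventually (\<lambda>k. f i0 (x k) - f i0 xb \<le> - c * \<tau> k) sequentially"
    and small: "\<forall>e>0. \<forall>j\<in>{1..p}. eventually (\<lambda>k. f j (x k) - f j xb \<le> e * \<tau> k) sequentially"
  shows "\<not> local_geoffrion p f m g xb"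
proof
  assume "local_geoffrion p f m g xb"
  then obtain U M where U: "open U" "xb \<in> U" and M: "M > 0"
    and tradeoff: "\<forall>i\<in>{1..p}. \<forall>y\<in>U \<inter> feasible_set m g. f i y < f i xb \<longrightarrow>
        (\<exists>j\<in>{1..p}. f j y > f j xb \<and> (f i xb - f i y) / (f j y - f j xb) \<le> M)"
    unfolding local_geoffrion_def by blast
  have "eventually (\<lambda>k. \<forall>j\<in>{1..p}. f j (x k) - f j xb \<le> c / (2 * M) * \<tau> k) sequentially"
  proof (intro eventually_ball_finite ballI)
    fix j assume "j \<in> {1..p}"
    then show "eventually (\<lambda>k. f j (x k) - f j xb \<le> c / (2 * M) * \<tau> k) sequentially"
      by (intro small[rule_format]) (use c M in auto)
  qed simp
  moreover have "eventually (\<lambda>k. x k \<in> U) sequentially"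
    using x U by (rule topological_tendstoD)
  ultimately have "eventually (\<lambda>k. f i0 (x k) - f i0 xb \<le> - c * \<tau> k \<and> x k \<in> U \<and>
      (\<forall>j\<in>{1..p}. f j (x k) - f j xb \<le> c / (2 * M) * \<tau> k)) sequentially"
    using descent by eventually_elim blast
  then obtain k where k: "f i0 (x k) - f i0 xb \<le> - c * \<tau> k" "x k \<in> U"
    and others: "\<forall>j\<in>{1..p}. f j (x k) - f j xb \<le> c / (2 * M) * \<tau> k"
    using eventually_happens'[OF sequentially_bot] by blast
  have c\<tau>: "c * \<tau> k > 0" using c \<tau> by simp
  then have "f i0 (x k) < f i0 xb" using k(1) by linarith
  then obtain j where j: "j \<in> {1..p}" "f j (x k) > f j xb"
    and ratio: "(f i0 xb - f i0 (x k)) / (f j (x k) - f j xb) \<le> M"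
    using tradeoff i0 k(2) feas by blast
  have "f i0 xb - f i0 (x k) \<le> M * (f j (x k) - f j xb)"
    using ratio j(2) by (simp add: pos_divide_le_eq mult.commute)
  also have "\<dots> \<le> M * (c / (2 * M) * \<tau> k)"
    using others j(1) M by (intro mult_left_mono) auto
  also have "\<dots> = c * \<tau> k / 2" using M by simp
  finally show False using k(1) c\<tau> by linarith
qed

theorem theorem5p1:
  fixes f g :: "nat \<Rightarrow> 'a::banach \<Rightarrow> real" and p m :: nat and xb :: 'a
  assumes feas: "xb \<in> feasible_set m g"
    and lipf: "\<forall>i\<in>{1..p}. loc_lipschitz_at (f i) xb"
    and lipg: "\<forall>j\<in>active_set m g xb. loc_lipschitz_at (g j) xb"
    and contg: "\<forall>j\<in>{1..m} - active_set m g xb. isCont (g j) xb"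
    and geo: "local_geoffrion p f m g xb"
    and cq: "\<forall>u\<in>critical_dirs p f m g xb.
               L2_set p f m g xb u \<subseteq> T2_set (feasible_set m g) xb u"
  shows "\<not> (\<exists>u v. (\<forall>i\<in>{1..p}. lex_le (second_pair (f i) xb u v) (0, 0)) \<and>
              (\<exists>i\<in>active_obj p f xb u. lex_lt (second_pair (f i) xb u v) (0, 0)) \<and>
              (\<forall>j\<in>active_set m g xb. lex_le (second_pair (g j) xb u v) (0, 0)))"
proof
  assume "\<exists>u v. (\<forall>i\<in>{1..p}. lex_le (second_pair (f i) xb u v) (0, 0)) \<and>
              (\<exists>i\<in>active_obj p f xb u. lex_lt (second_pair (f i) xb u v) (0, 0)) \<and>
              (\<forall>j\<in>active_set m g xb. lex_le (second_pair (g j) xb u v) (0, 0))"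
  then obtain u v i0 where fle: "\<forall>i\<in>{1..p}. lex_le (second_pair (f i) xb u v) (0, 0)"
    and i0: "i0 \<in> {1..p}" "clarke_dd (f i0) xb u = 0"
    and i0_lt: "lex_lt (second_pair (f i0) xb u v) (0, 0)"
    and gle: "\<forall>j\<in>active_set m g xb. lex_le (second_pair (g j) xb u v) (0, 0)"
    unfolding active_obj_def by blast
  have "u \<in> critical_dirs p f m g xb"
    using fle gle i0 by (auto simp: critical_dirs_def lex_le_second_pair_zero_iff)
  moreover have "v \<in> L2_set p f m g xb u" by (simp add: L2_set_def fle gle)
  ultimately have "v \<in> T2_set (feasible_set m g) xb u" using cq by blast
  then obtain t w where tpos: "\<forall>k. t k > 0" and t0: "t \<longlonglongrightarrow> 0" and w: "w \<longlonglongrightarrow> v"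
    and x_feas: "\<forall>k. xb + t k *\<^sub>R u + ((1/2) * (t k)\<^sup>2) *\<^sub>R w k \<in> feasible_set m g"
    unfolding T2_set_def by blast
  have t: "filterlim t (at_right 0) sequentially"
    using tendsto_imp_filterlim_at_right[OF t0] tpos by simp
  obtain c where c: "c > 0" and descent: "eventually (\<lambda>k.
      f i0 (xb + t k *\<^sub>R u + ((1/2) * (t k)\<^sup>2) *\<^sub>R w k) - f i0 xb \<le> - c * (t k)\<^sup>2) sequentially"
    using lex_lt_second_pair_imp_eventually_le[OF lipf[rule_format, OF i0(1)] t w i0(2) i0_lt] .
  have small: "\<forall>e>0. \<forall>j\<in>{1..p}. eventually (\<lambda>k.
      f j (xb + t k *\<^sub>R u + ((1/2) * (t k)\<^sup>2) *\<^sub>R w k) - f j xb \<le> e * (t k)\<^sup>2) sequentially"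
    using lex_le_second_pair_imp_eventually_le[OF lipf[rule_format] t w fle[rule_format]] by blast
  have x: "(\<lambda>k. xb + t k *\<^sub>R u + ((1/2) * (t k)\<^sup>2) *\<^sub>R w k) \<longlonglongrightarrow> xb"
    by (rule tendsto_second_order_curve[OF t0 w])
  have t2: "\<forall>k. (t k)\<^sup>2 > 0" using tpos by (blast intro: zero_less_power)
  from not_local_geoffrion_if_unbounded_tradeoff[OF x x_feas t2 i0(1) c descent small] geo
  show False by contradiction
qed

end
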